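(* If $D$ is a quaternary near-extremal Hermitian self-dual code of length $30$ and $\alpha$ denotes the number of codewords of weight $10$ in $D$, then $\alpha=9\beta$ for some integer $\beta$ with $1\le\beta\le 1319$.
   Context: Let $\mathbb{F}_4=\{0,1,\omega,\omega^2\}$ with $\omega^2=\omega+1$. A quaternary code of length $n$ is a linear subspace of $\mathbb{F}_4^n$; it is Hermitian self-dual if it equals its dual with respect to $\langle x,y\rangle_H=\sum_k x_k y_k^2$. The weight of a vector is the number of nonzero coordinates. A quaternary Hermitian self-dual code of length $30$ is near-extremal if its minimum nonzero weight is $10$. *)

theory Defs
  imports Main
begin

text \<open>The field F4 = {0, 1, w, w^2} with w^2 = w + 1 (characteristic 2).\<close>
datatype gf4 = G0 | G1 | GW | GW2

fun gf4_add :: "gf4 \<Rightarrow> gf4 \<Rightarrow> gf4" where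
  "gf4_add G0 y = y"
| "gf4_add x G0 = x"
| "gf4_add G1 G1 = G0" | "gf4_add G1 GW = GW2" | "gf4_add G1 GW2 = GW"
| "gf4_add GW G1 = GW2" | "gf4_add GW GW = G0" | "gf4_add GW GW2 = G1"
| "gf4_add GW2 G1 = GW" | "gf4_add GW2 GW = G1" | "gf4_add GW2 GW2 = G0"

fun gf4_mul :: "gf4 \<Rightarrow> gf4 \<Rightarrow> gf4" where
  "gf4_mul G0 y = G0"
| "gf4_mul x G0 = G0"
| "gf4_mul G1 y = y"
| "gf4_mul x G1 = x"
| "gf4_mul GW GW = GW2" | "gf4_mul GW GW2 = G1"
| "gf4_mul GW2 GW = G1" | "gf4_mul GW2 GW2 = GW"

definition vecs :: "nat \<Rightarrow> (nat \<Rightarrow> gf4) set" where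
  "vecs n = {x. \<forall>k\<ge>n. x k = G0}"

definition vadd :: "(nat \<Rightarrow> gf4) \<Rightarrow> (nat \<Rightarrow> gf4) \<Rightarrow> nat \<Rightarrow> gf4" where
  "vadd x y = (\<lambda>k. gf4_add (x k) (y k))"

definition smul :: "gf4 \<Rightarrow> (nat \<Rightarrow> gf4) \<Rightarrow> nat \<Rightarrow> gf4" where
  "smul a x = (\<lambda>k. gf4_mul a (x k))"

definition linear_code :: "nat \<Rightarrow> (nat \<Rightarrow> gf4) set \<Rightarrow> bool" where
  "linear_code n C \<longleftrightarrow> C \<subseteq> vecs n \<and> (\<lambda>k. G0) \<in> C
     \<and> (\<forall>x\<in>C. \<forall>y\<in>C. vadd x y \<in> C) \<and> (\<forall>a. \<forall>x\<in>C. smul a x \<in> C)"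

definition herm :: "nat \<Rightarrow> (nat \<Rightarrow> gf4) \<Rightarrow> (nat \<Rightarrow> gf4) \<Rightarrow> gf4" where
  "herm n x y = foldr gf4_add (map (\<lambda>k. gf4_mul (x k) (gf4_mul (y k) (y k))) [0..<n]) G0"

definition herm_dual :: "nat \<Rightarrow> (nat \<Rightarrow> gf4) set \<Rightarrow> (nat \<Rightarrow> gf4) set" where
  "herm_dual n C = {y \<in> vecs n. \<forall>x\<in>C. herm n x y = G0}"

definition herm_self_dual :: "nat \<Rightarrow> (nat \<Rightarrow> gf4) set \<Rightarrow> bool" where
  "herm_self_dual n C \<longleftrightarrow> linear_code n C \<and> herm_dual n C = C"

definition wt :: "nat \<Rightarrow> (nat \<Rightarrow> gf4) \<Rightarrow> nat" where
  "wt n x = card {k. k < n \<and> x k \<noteq> G0}"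

definition min_weight :: "nat \<Rightarrow> (nat \<Rightarrow> gf4) set \<Rightarrow> nat" where
  "min_weight n C = (LEAST w. \<exists>x\<in>C. x \<noteq> (\<lambda>k. G0) \<and> wt n x = w)"

definition near_extremal_30 :: "(nat \<Rightarrow> gf4) set \<Rightarrow> bool" where
  "near_extremal_30 D \<longleftrightarrow> herm_self_dual 30 D \<and> min_weight 30 D = 10"

end

theory Submission
  imports Defs "HOL-Library.FuncSet"
begin

text \<open>Since \<open>D\<close> is Hermitian self-dual, \<open>|D| = 2^30\<close>, and evaluating a character sum in two
  ways gives \<open>2^30 |D(U\<^sup>c)| = 4^(30 - |U|) |D(U)|\<close> for every set \<open>U\<close> of coordinates, where
  \<open>D(U)\<close> is the set of codewords supported in \<open>U\<close>. Summing over the \<open>u\<close>-subsets \<open>U\<close> of the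
  coordinates \<open>1, \<dots>, 29\<close> and counting codewords instead of subsets yields, for \<open>u = 20, \<dots>, 29\<close>,
  ten linear equations in the numbers \<open>B w\<close> of codewords of weight \<open>w\<close> vanishing at coordinate
  \<open>0\<close>. On the other side, as the minimum weight is \<open>10\<close>, the only nonzero codewords supported in
  the complement of such a \<open>U\<close> are, for \<open>u = 20\<close>, the \<open>\<gamma>\<close> words of weight \<open>10\<close> that do not
  vanish at \<open>0\<close>. Solving gives \<open>B 10 = 2\<gamma>\<close> and \<open>B 12 + 18\<gamma> = 71253\<close>. Scaling by the three
  nonzero scalars gives \<open>\<gamma> = 3\<beta>\<close>, where \<open>\<beta>\<close> counts the words of weight \<open>10\<close> with first
  coordinate \<open>1\<close>; hence \<open>\<alpha> = B 10 + \<gamma> = 9\<beta>\<close> and \<open>54\<beta> \<le> 71253\<close>.\<close>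

lemma sum_eq_0_if_sign_reversing_bij:
  fixes h :: "'a \<Rightarrow> 'b::linordered_ab_group_add"
  assumes "bij_betw t A A" and "\<And>x. x \<in> A \<Longrightarrow> h (t x) = - h x"
  shows "sum h A = 0"
proof -
  have "sum h A = sum (\<lambda>x. h (t x)) A"
    by (rule sum.reindex_bij_betw[OF assms(1), symmetric])
  also have "\<dots> = - sum h A"
    using assms(2) by (simp add: sum_negf)
  finally show ?thesis by simp
qed

lemma sum_if_eq_card:
  fixes c :: "'a::comm_semiring_1"
  shows "finite A \<Longrightarrow> (\<Sum>x\<in>A. if P x then c else 0) = c * of_nat (card {x\<in>A. P x})"
  by (simp add: sum.inter_filter[symmetric] mult.commute)

lemma double_counting:
  assumes "finite A" "finite B"
  shows "(\<Sum>b\<in>B. card {a\<in>A. R a b}) = (\<Sum>a\<in>A. card {b\<in>B. R a b})"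
proof -
  have "(\<Sum>b\<in>B. card {a\<in>A. R a b}) = (\<Sum>b\<in>B. \<Sum>a\<in>A. if R a b then 1 else 0)"
    using assms by (simp add: sum_if_eq_card)
  also have "\<dots> = (\<Sum>a\<in>A. \<Sum>b\<in>B. if R a b then 1 else 0)"
    by (rule sum.swap)
  finally show ?thesis
    using assms by (simp add: sum_if_eq_card)
qed

lemma sum_by_fibres:
  assumes "finite A" "finite W" "g ` A \<subseteq> W"
  shows "(\<Sum>x\<in>A. f (g x)) = (\<Sum>w\<in>W. of_nat (card {x\<in>A. g x = w}) * f w)"
proof -
  have "(\<Sum>x\<in>A. f (g x)) = (\<Sum>w\<in>W. \<Sum>x | x \<in> A \<and> g x = w. f (g x))"
    by (rule sum.group[OF assms, symmetric])
  also have "\<dots> = (\<Sum>w\<in>W. of_nat (card {x\<in>A. g x = w}) * f w)"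
    by (simp add: mult.commute)
  finally show ?thesis .
qed

lemma card_subsets_containing:
  assumes "finite A" "S \<subseteq> A" "u \<le> card A"
  shows "card {U. U \<subseteq> A \<and> card U = u \<and> S \<subseteq> U} = (card A - card S) choose (card A - u)"
proof -
  have "bij_betw (\<lambda>U. A - U) {U. U \<subseteq> A \<and> card U = u \<and> S \<subseteq> U} {V. V \<subseteq> A - S \<and> card V = card A - u}"
  proof (rule bij_betwI[where g = "\<lambda>V. A - V"])
    show "(\<lambda>U. A - U) \<in> {U. U \<subseteq> A \<and> card U = u \<and> S \<subseteq> U} \<rightarrow> {V. V \<subseteq> A - S \<and> card V = card A - u}"
      using assms(1) by (auto simp: card_Diff_subset finite_subset)
    show "(\<lambda>V. A - V) \<in> {V. V \<subseteq> A - S \<and> card V = card A - u} \<rightarrow> {U. U \<subseteq> A \<and> card U = u \<and> S \<subseteq> U}"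
    proof
      fix V assume "V \<in> {V. V \<subseteq> A - S \<and> card V = card A - u}"
      then have "V \<subseteq> A" "card V = card A - u" "S \<inter> V = {}" by auto
      then show "A - V \<in> {U. U \<subseteq> A \<and> card U = u \<and> S \<subseteq> U}"
        using assms by (auto simp: card_Diff_subset finite_subset)
    qed
  qed auto
  then show ?thesis
    using assms(1,2) by (simp add: bij_betw_same_card n_subsets card_Diff_subset finite_subset)
qed

lemma card_subsets_disjoint:
  "finite A \<Longrightarrow> card {U. U \<subseteq> A \<and> card U = u \<and> S \<inter> U = {}} = card (A - S) choose u"
proof -
  assume "finite A"
  moreover have "{U. U \<subseteq> A \<and> card U = u \<and> S \<inter> U = {}} = {U. U \<subseteq> A - S \<and> card U = u}"
    by blast
  ultimately show ?thesis by (simp add: n_subsets)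
qed

section \<open>The field with four elements\<close>

instantiation gf4 :: field
begin
definition "zero_gf4 = G0"
definition "one_gf4 = G1"
definition "plus_gf4 = gf4_add"
definition "times_gf4 = gf4_mul"
definition "uminus_gf4 = (\<lambda>x::gf4. x)"
definition "minus_gf4 = gf4_add"
\<comment> \<open>\<open>a\<^sup>3 = 1\<close> for \<open>a \<noteq> 0\<close>, so the inverse is the square\<close>
definition "inverse_gf4 = (\<lambda>x. gf4_mul x x)"
definition "divide_gf4 = (\<lambda>x y. gf4_mul x (gf4_mul y y))"
instance
proof
  fix a b c :: gf4
  show "a * b * c = a * (b * c)" unfolding times_gf4_def by (cases a; cases b; cases c; simp)
  show "a * b = b * a" unfolding times_gf4_def by (cases a; cases b; simp)
  show "1 * a = a" unfolding times_gf4_def one_gf4_def by (cases a; simp)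
  show "a + b + c = a + (b + c)" unfolding plus_gf4_def by (cases a; cases b; cases c; simp)
  show "a + b = b + a" unfolding plus_gf4_def by (cases a; cases b; simp)
  show "0 + a = a" unfolding plus_gf4_def zero_gf4_def by (cases a; simp)
  show "- a + a = 0" unfolding plus_gf4_def zero_gf4_def uminus_gf4_def by (cases a; simp)
  show "a - b = a + - b" unfolding plus_gf4_def minus_gf4_def uminus_gf4_def by (cases a; cases b; simp)
  show "(a + b) * c = a * c + b * c" unfolding plus_gf4_def times_gf4_def
    by (cases a; cases b; cases c; simp)
  show "(0::gf4) \<noteq> 1" unfolding zero_gf4_def one_gf4_def by simp
  show "a \<noteq> 0 \<Longrightarrow> inverse a * a = 1" unfolding inverse_gf4_def times_gf4_def zero_gf4_def one_gf4_def
    by (cases a; simp)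
  show "divide a b = a * inverse b" unfolding divide_gf4_def inverse_gf4_def times_gf4_def by simp
  show "inverse (0::gf4) = 0" unfolding inverse_gf4_def zero_gf4_def by simp
qed
end

lemmas gf4_defs = zero_gf4_def one_gf4_def plus_gf4_def times_gf4_def

lemma G0_eq_0: "G0 = 0"
  by (simp add: zero_gf4_def)

lemma UNIV_gf4: "(UNIV :: gf4 set) = {0, 1, GW, GW2}"
proof -
  have "x \<in> {0, 1, GW, GW2}" for x by (cases x) (auto simp: gf4_defs)
  then show ?thesis by auto
qed

lemma card_UNIV_gf4: "card (UNIV :: gf4 set) = 4"
  by (simp add: UNIV_gf4 gf4_defs)

lemma gf4_add_self [simp]: "(a::gf4) + a = 0"
  by (cases a) (simp_all add: gf4_defs)

lemma gf4_square_add: "((a::gf4) + b) * (a + b) = a * a + b * b"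
  by (cases a; cases b) (simp_all add: gf4_defs)

lemma gf4_cube: "(a::gf4) * (a * a) = (if a = 0 then 0 else 1)"
  by (cases a) (simp_all add: gf4_defs)

lemma gf4_square_surj: "\<exists>c. c * c = (b::gf4)"
proof (cases b)
  case GW then show ?thesis by (intro exI[of _ GW2]) (simp add: times_gf4_def)
next
  case GW2 then show ?thesis by (intro exI[of _ GW]) (simp add: times_gf4_def)
qed (auto intro: exI[of _ b] simp: times_gf4_def)

lemma of_nat_gf4: "(of_nat m :: gf4) = (if even m then 0 else 1)"
  by (induction m) simp_all

text \<open>The additive character \<open>a \<mapsto> (-1)^Tr(a)\<close>, where the trace \<open>Tr(a) = a + a\<^sup>2\<close> to
  the prime field vanishes exactly on \<open>{0, 1}\<close>.\<close>
definition gf4_char :: "gf4 \<Rightarrow> int" where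
  "gf4_char a = (if a = 0 \<or> a = 1 then 1 else -1)"

lemma gf4_char_0 [simp]: "gf4_char 0 = 1"
  by (simp add: gf4_char_def)

lemma gf4_char_add: "gf4_char (a + b) = gf4_char a * gf4_char b"
  by (cases a; cases b) (simp_all add: gf4_char_def gf4_defs)

lemma gf4_char_nontrivial:
  assumes "(a::gf4) \<noteq> 0" shows "\<exists>c. gf4_char (c * a) = -1"
proof
  have "GW / a * a = GW" using assms by simp
  then show "gf4_char (GW / a * a) = -1" by (simp add: gf4_char_def gf4_defs)
qed

section \<open>Vectors, supports and the Hermitian form\<close>

lemma vadd_apply [simp]: "vadd x y k = x k + y k"
  by (simp add: vadd_def plus_gf4_def)

lemma smul_apply [simp]: "smul a x k = a * x k"
  by (simp add: smul_def times_gf4_def)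

lemma herm_eq_sum: "herm n x y = (\<Sum>k<n. x k * (y k * y k))"
proof -
  have "gf4_add = (+)" "gf4_mul = (*)"
    by (simp_all add: fun_eq_iff gf4_defs)
  then show ?thesis
    by (simp add: herm_def G0_eq_0 sum_list.eq_foldr[symmetric] interv_sum_list_conv_sum_set_nat
        lessThan_atLeast0)
qed

lemma herm_vadd_left: "herm n (vadd x x') y = herm n x y + herm n x' y"
  by (simp add: herm_eq_sum distrib_right sum.distrib)

lemma herm_smul_left: "herm n (smul a x) y = a * herm n x y"
  by (simp add: herm_eq_sum sum_distrib_left mult.assoc)

lemma herm_vadd_right: "herm n x (vadd y y') = herm n x y + herm n x y'"
  unfolding herm_eq_sum vadd_apply gf4_square_add by (simp add: distrib_left sum.distrib)

definition supported_on :: "nat set \<Rightarrow> (nat \<Rightarrow> gf4) set" where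
  "supported_on T = {y. \<forall>k. k \<notin> T \<longrightarrow> y k = 0}"

definition support :: "nat \<Rightarrow> (nat \<Rightarrow> gf4) \<Rightarrow> nat set" where
  "support n x = {k. k < n \<and> x k \<noteq> 0}"

lemma vecs_eq_supported_on: "vecs n = supported_on {..<n}"
  by (auto simp: vecs_def supported_on_def zero_gf4_def)

lemma
  assumes "finite T"
  shows finite_supported_on: "finite (supported_on T)"
    and card_supported_on: "card (supported_on T) = 4 ^ card T"
proof -
  have "bij_betw (\<lambda>y. restrict y T) (supported_on T) (T \<rightarrow>\<^sub>E UNIV)"
    by (rule bij_betwI[where g = "\<lambda>h k. if k \<in> T then h k else 0"])
      (auto simp: supported_on_def fun_eq_iff PiE_def extensional_def)
  moreover have "finite (T \<rightarrow>\<^sub>E (UNIV :: gf4 set))"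
    using assms by (simp add: finite_PiE UNIV_gf4)
  moreover have "card (T \<rightarrow>\<^sub>E (UNIV :: gf4 set)) = 4 ^ card T"
    using assms by (simp add: card_funcsetE card_UNIV_gf4)
  ultimately show "finite (supported_on T)" "card (supported_on T) = 4 ^ card T"
    by (metis bij_betw_finite bij_betw_same_card)+
qed

lemma finite_vecs: "finite (vecs n)"
  by (simp add: vecs_eq_supported_on finite_supported_on)

lemma wt_eq_card_support: "wt n x = card (support n x)"
  by (simp add: wt_def support_def zero_gf4_def)

lemma finite_support [simp]: "finite (support n x)"
  by (simp add: support_def)

lemma support_subset: "support n x \<subseteq> {..<n}"
  by (auto simp: support_def)

lemma supported_on_iff_support_subset:
  "x \<in> vecs n \<Longrightarrow> x \<in> supported_on U \<longleftrightarrow> support n x \<subseteq> U"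
  by (auto simp: vecs_def supported_on_def support_def G0_eq_0 subset_iff) (meson not_le)

lemma vanishes_outside_iff_supported_on:
  "x \<in> vecs n \<Longrightarrow> (\<forall>k\<in>{..<n} - U. x k = 0) \<longleftrightarrow> x \<in> supported_on U"
  by (auto simp: vecs_def supported_on_def G0_eq_0) (metis Diff_iff lessThan_iff not_le)

lemma wt_eq_0_iff: "x \<in> vecs n \<Longrightarrow> wt n x = 0 \<longleftrightarrow> x = (\<lambda>k. 0)"
  by (auto simp: wt_eq_card_support support_def vecs_def G0_eq_0 fun_eq_iff) (meson not_le)

lemma wt_zero [simp]: "wt n (\<lambda>k. 0) = 0"
  by (simp add: wt_eq_card_support support_def)

lemma wt_smul: "a \<noteq> 0 \<Longrightarrow> wt n (smul a x) = wt n x"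
  by (simp add: wt_eq_card_support support_def)

lemma min_weight_le_wt:
  "x \<in> C \<Longrightarrow> x \<noteq> (\<lambda>k. 0) \<Longrightarrow> min_weight n C \<le> wt n x"
  unfolding min_weight_def G0_eq_0 by (rule Least_le) blast

lemma ex_wt_eq_min_weight:
  "x \<in> C \<Longrightarrow> x \<noteq> (\<lambda>k. 0) \<Longrightarrow> \<exists>y\<in>C. y \<noteq> (\<lambda>k. 0) \<and> wt n y = min_weight n C"
  unfolding min_weight_def G0_eq_0 by (rule LeastI) blast

section \<open>Linear codes and the MacWilliams identity\<close>

lemma sum_gf4_char_eq_0_if_translation:
  assumes "\<And>x. x \<in> A \<Longrightarrow> vadd x z \<in> A"
    and "\<And>x. x \<in> A \<Longrightarrow> f (vadd x z) = f x + f z"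
    and "gf4_char (f z) = -1"
  shows "(\<Sum>x\<in>A. gf4_char (f x)) = 0"
proof (rule sum_eq_0_if_sign_reversing_bij)
  have "vadd (vadd x z) z = x" for x by (simp add: fun_eq_iff add.assoc)
  then show "bij_betw (\<lambda>x. vadd x z) A A"
    using assms(1) by (intro bij_betwI[where g = "\<lambda>x. vadd x z"]) auto
qed (simp add: assms(2,3) gf4_char_add)

lemma sum_gf4_char_herm_supported_on:
  assumes "finite T" "T \<subseteq> {..<n}"
  shows "(\<Sum>y\<in>supported_on T. gf4_char (herm n x y)) = (if \<forall>k\<in>T. x k = 0 then 4 ^ card T else 0)"
proof (cases "\<forall>k\<in>T. x k = 0")
  case True
  then have "herm n x y = 0" if "y \<in> supported_on T" for y
    using that by (auto simp: herm_eq_sum supported_on_def intro!: sum.neutral)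
  then show ?thesis using True assms(1) by (simp add: card_supported_on)
next
  case False
  then obtain k where k: "k \<in> T" "x k \<noteq> 0" by auto
  obtain a where a: "gf4_char (a * x k) = -1" using gf4_char_nontrivial[OF k(2)] by auto
  obtain c where c: "c * c = a" using gf4_square_surj by auto
  define z where "z = (\<lambda>i. if i = k then c else 0)"
  have "herm n x z = x k * (c * c)"
    using k assms(2) by (simp add: herm_eq_sum z_def if_distrib subset_iff cong: if_cong)
  then have "gf4_char (herm n x z) = -1" using a c by (simp add: mult.commute)
  moreover have "vadd y z \<in> supported_on T" if "y \<in> supported_on T" for y
    using that k by (auto simp: supported_on_def z_def)
  ultimately have "(\<Sum>y\<in>supported_on T. gf4_char (herm n x y)) = 0"
    by (intro sum_gf4_char_eq_0_if_translation) (simp_all add: herm_vadd_right)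
  then show ?thesis using False by simp
qed

lemma finite_linear_code: "linear_code n C \<Longrightarrow> finite C"
  by (meson finite_subset finite_vecs linear_code_def)

lemma sum_gf4_char_herm_linear_code:
  assumes "linear_code n C" "y \<in> vecs n"
  shows "(\<Sum>x\<in>C. gf4_char (herm n x y)) = (if y \<in> herm_dual n C then int (card C) else 0)"
proof (cases "y \<in> herm_dual n C")
  case True
  then show ?thesis by (simp add: herm_dual_def G0_eq_0)
next
  case False
  then obtain x0 where x0: "x0 \<in> C" "herm n x0 y \<noteq> 0"
    using assms(2) by (auto simp: herm_dual_def G0_eq_0)
  obtain c where c: "gf4_char (c * herm n x0 y) = -1" using gf4_char_nontrivial[OF x0(2)] by auto
  have "vadd x (smul c x0) \<in> C" if "x \<in> C" for x
    using assms(1) x0(1) that by (simp add: linear_code_def)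
  moreover have "gf4_char (herm n (smul c x0) y) = -1"
    using c by (simp add: herm_smul_left)
  ultimately have "(\<Sum>x\<in>C. gf4_char (herm n x y)) = 0"
    by (intro sum_gf4_char_eq_0_if_translation) (simp_all add: herm_vadd_left)
  then show ?thesis using False by simp
qed

text \<open>The MacWilliams identity for the puncturing and shortening of \<open>C\<close> on \<open>T\<close>, obtained by
  evaluating \<open>\<Sum>x\<in>C. \<Sum>y\<in>supported_on T. gf4_char (herm n x y)\<close> in both orders.\<close>
lemma card_linear_code_mult_card_dual_supported_on:
  assumes "linear_code n C" "T \<subseteq> {..<n}"
  shows "card C * card (herm_dual n C \<inter> supported_on T) = 4 ^ card T * card {x\<in>C. \<forall>k\<in>T. x k = 0}"
proof -
  have T: "finite T" using assms(2) finite_subset by blast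
  have C: "finite C" using assms(1) by (rule finite_linear_code)
  have Tn: "supported_on T \<subseteq> vecs n"
    using assms(2) by (auto simp: vecs_eq_supported_on supported_on_def)
  have "int (4 ^ card T * card {x\<in>C. \<forall>k\<in>T. x k = 0})
      = (\<Sum>x\<in>C. \<Sum>y\<in>supported_on T. gf4_char (herm n x y))"
    using T assms(2) C by (simp add: sum_gf4_char_herm_supported_on sum_if_eq_card)
  also have "\<dots> = (\<Sum>y\<in>supported_on T. \<Sum>x\<in>C. gf4_char (herm n x y))"
    by (rule sum.swap)
  also have "\<dots> = (\<Sum>y\<in>supported_on T. if y \<in> herm_dual n C then int (card C) else 0)"
    using Tn assms(1) by (intro sum.cong) (auto simp: sum_gf4_char_herm_linear_code)
  also have "\<dots> = int (card C * card {y\<in>supported_on T. y \<in> herm_dual n C})"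
    using T by (simp add: finite_supported_on sum_if_eq_card)
  also have "{y\<in>supported_on T. y \<in> herm_dual n C} = herm_dual n C \<inter> supported_on T"
    by blast
  finally show ?thesis by (simp only: of_nat_eq_iff)
qed

lemma linear_code_card_wt_coord_nonzero:
  assumes "linear_code n C"
  shows "card {x\<in>C. wt n x = w \<and> x i \<noteq> 0} = 3 * card {x\<in>C. wt n x = w \<and> x i = 1}"
proof -
  have smul: "smul a x \<in> C" if "x \<in> C" for a x
    using assms that by (simp add: linear_code_def)
  have "bij_betw (\<lambda>(a, y). smul a y) ({a. a \<noteq> 0} \<times> {x\<in>C. wt n x = w \<and> x i = 1})
          {x\<in>C. wt n x = w \<and> x i \<noteq> 0}"
    by (rule bij_betwI[where g = "\<lambda>x. (x i, smul (inverse (x i)) x)"])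
      (auto simp: smul wt_smul fun_eq_iff)
  then have "card {x\<in>C. wt n x = w \<and> x i \<noteq> 0} = card {a::gf4. a \<noteq> 0} * card {x\<in>C. wt n x = w \<and> x i = 1}"
    by (simp add: bij_betw_same_card[symmetric] card_cartesian_product)
  moreover have "card {a::gf4. a \<noteq> 0} = 3"
  proof -
    have "{a::gf4. a \<noteq> 0} = UNIV - {0}" by blast
    then show ?thesis by (simp add: UNIV_gf4 gf4_defs)
  qed
  ultimately show ?thesis by simp
qed

section \<open>Hermitian self-dual codes\<close>

lemma herm_self_dual_card_mult_card_supported_on:
  assumes "herm_self_dual n C" "U \<subseteq> {..<n}"
  shows "card C * card (C \<inter> supported_on ({..<n} - U)) = 4 ^ (n - card U) * card (C \<inter> supported_on U)"
proof -
  have C: "linear_code n C" "herm_dual n C = C" "C \<subseteq> vecs n"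
    using assms(1) by (auto simp: herm_self_dual_def linear_code_def)
  have "card ({..<n} - U) = n - card U"
    using assms(2) by (simp add: card_Diff_subset finite_subset)
  moreover have "{x\<in>C. \<forall>k\<in>{..<n} - U. x k = 0} = C \<inter> supported_on U"
    using C(3) vanishes_outside_iff_supported_on by blast
  ultimately show ?thesis
    using card_linear_code_mult_card_dual_supported_on[OF C(1), of "{..<n} - U"] C(2) by simp
qed

lemma herm_self_dual_card: "herm_self_dual n C \<Longrightarrow> card C = 2 ^ n"
proof -
  assume C: "herm_self_dual n C"
  then have "(\<lambda>k. 0) \<in> C" "C \<subseteq> vecs n"
    by (auto simp: herm_self_dual_def linear_code_def G0_eq_0)
  then have "C \<inter> supported_on {} = {\<lambda>k. 0}" "C \<inter> supported_on {..<n} = C"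
    by (auto simp: supported_on_def vecs_eq_supported_on)
  then have "card C * card C = (2 ^ n) * (2 ^ n)"
    using herm_self_dual_card_mult_card_supported_on[OF C, of "{}"]
    by (simp add: power_mult_distrib[symmetric])
  then show ?thesis by (simp add: power2_eq_square[symmetric] power2_eq_iff_nonneg)
qed

lemma herm_self_dual_card_supported_on:
  assumes "herm_self_dual n C" "U \<subseteq> {..<n}"
  shows "2 ^ n * card (C \<inter> supported_on ({..<n} - U)) = 4 ^ (n - card U) * card (C \<inter> supported_on U)"
  using herm_self_dual_card_mult_card_supported_on[OF assms] herm_self_dual_card[OF assms(1)] by simp

lemma herm_self_dual_even_wt:
  assumes "herm_self_dual n C" "x \<in> C"
  shows "even (wt n x)"
proof -
  have "herm n x x = 0"
    using assms by (auto simp: herm_self_dual_def herm_dual_def G0_eq_0)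
  moreover have "herm n x x = (\<Sum>k<n. if x k \<noteq> 0 then 1 else 0)"
    unfolding herm_eq_sum by (intro sum.cong) (simp_all add: gf4_cube)
  ultimately have "(of_nat (card {k\<in>{..<n}. x k \<noteq> 0}) :: gf4) = 0"
    by (simp add: sum_if_eq_card)
  moreover have "{k\<in>{..<n}. x k \<noteq> 0} = support n x"
    by (auto simp: support_def)
  ultimately show ?thesis
    by (simp add: wt_eq_card_support of_nat_gf4 split: if_splits)
qed

lemma sum_card_supported_on_subsets:
  assumes "finite C" "C \<subseteq> vecs n" "u < n"
  shows "(\<Sum>U | U \<subseteq> {1..<n} \<and> card U = u. card (C \<inter> supported_on U))
       = (\<Sum>x | x \<in> C \<and> x 0 = 0. (n - 1 - wt n x) choose (n - 1 - u))"
proof -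
  have "card {U. (U \<subseteq> {1..<n} \<and> card U = u) \<and> x \<in> supported_on U}
      = (if x 0 = 0 then (n - 1 - wt n x) choose (n - 1 - u) else 0)" if "x \<in> C" for x
  proof -
    have x: "x \<in> supported_on U \<longleftrightarrow> support n x \<subseteq> U" for U
      using that assms(2) supported_on_iff_support_subset by blast
    show ?thesis
    proof (cases "x 0 = 0")
      case True
      then have "support n x \<subseteq> {1..<n}"
        by (auto simp: support_def Suc_le_eq) (metis gr0I)
      then show ?thesis
        using True assms(3) x card_subsets_containing[of "{1..<n}" "support n x" u]
        by (simp add: wt_eq_card_support conj_assoc)
    next
      case False
      then have "0 \<in> support n x" using assms(3) by (simp add: support_def)
      then have "{U. (U \<subseteq> {1..<n} \<and> card U = u) \<and> x \<in> supported_on U} = {}"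
        using x by auto
      then show ?thesis using False by simp
    qed
  qed
  then have "(\<Sum>U | U \<subseteq> {1..<n} \<and> card U = u. card {x\<in>C. x \<in> supported_on U})
      = (\<Sum>x\<in>C. if x 0 = 0 then (n - 1 - wt n x) choose (n - 1 - u) else 0)"
    using assms(1) by (simp add: double_counting finite_Collect_conjI)
  also have "\<dots> = (\<Sum>x | x \<in> C \<and> x 0 = 0. (n - 1 - wt n x) choose (n - 1 - u))"
    by (rule sum.inter_filter[OF assms(1), symmetric])
  finally show ?thesis by (simp add: Int_def)
qed

lemma sum_card_supported_on_complements:
  assumes "finite C" "C \<subseteq> vecs n"
  shows "(\<Sum>U | U \<subseteq> {1..<n} \<and> card U = u. card (C \<inter> supported_on ({..<n} - U)))
       = (\<Sum>x\<in>C. (n - 1 - card (support n x - {0})) choose u)"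
proof -
  have "card {U. (U \<subseteq> {1..<n} \<and> card U = u) \<and> x \<in> supported_on ({..<n} - U)}
      = (n - 1 - card (support n x - {0})) choose u" if "x \<in> C" for x
  proof -
    have "x \<in> vecs n" using that assms(2) by blast
    then have "x \<in> supported_on ({..<n} - U) \<longleftrightarrow> support n x \<inter> U = {}" for U
      using support_subset[of n x] by (auto simp: supported_on_iff_support_subset)
    then have "{U. (U \<subseteq> {1..<n} \<and> card U = u) \<and> x \<in> supported_on ({..<n} - U)}
        = {U. U \<subseteq> {1..<n} \<and> card U = u \<and> support n x \<inter> U = {}}"
      by blast
    moreover have "{1..<n} \<inter> support n x = support n x - {0}"
      using support_subset[of n x] by auto
    then have "card ({1..<n} - support n x) = n - 1 - card (support n x - {0})"
      by (simp add: card_Diff_subset_Int)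
    ultimately show ?thesis by (simp add: card_subsets_disjoint)
  qed
  then have "(\<Sum>U | U \<subseteq> {1..<n} \<and> card U = u. card {x\<in>C. x \<in> supported_on ({..<n} - U)})
      = (\<Sum>x\<in>C. (n - 1 - card (support n x - {0})) choose u)"
    using assms(1) by (simp add: double_counting finite_Collect_conjI)
  then show ?thesis by (simp add: Int_def)
qed

text \<open>Sum the support identity over all \<open>u\<close>-subsets \<open>U\<close> of the coordinates \<open>{1..<n}\<close>, and on
  each side count codewords instead of subsets.\<close>
lemma herm_self_dual_shortening_identity:
  assumes "herm_self_dual n C" "u < n"
  shows "4 ^ (n - u) * (\<Sum>x | x \<in> C \<and> x 0 = 0. (n - 1 - wt n x) choose (n - 1 - u))
       = 2 ^ n * (\<Sum>x\<in>C. (n - 1 - card (support n x - {0})) choose u)"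
proof -
  have C: "finite C" "C \<subseteq> vecs n"
    using assms(1) by (auto simp: herm_self_dual_def linear_code_def intro: finite_linear_code)
  have "2 ^ n * card (C \<inter> supported_on ({..<n} - U)) = 4 ^ (n - u) * card (C \<inter> supported_on U)"
    if "U \<subseteq> {1..<n}" "card U = u" for U
  proof -
    have "U \<subseteq> {..<n}" using that(1) by auto
    then show ?thesis using herm_self_dual_card_supported_on[OF assms(1)] that(2) by blast
  qed
  then have "4 ^ (n - u) * (\<Sum>U | U \<subseteq> {1..<n} \<and> card U = u. card (C \<inter> supported_on U))
      = 2 ^ n * (\<Sum>U | U \<subseteq> {1..<n} \<and> card U = u. card (C \<inter> supported_on ({..<n} - U)))"
    by (simp add: sum_distrib_left)
  then show ?thesis
    by (simp only: sum_card_supported_on_subsets[OF C assms(2)] sum_card_supported_on_complements[OF C])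
qed

section \<open>Near-extremal codes of length 30\<close>

lemma near_extremal_30_ex_wt_10:
  assumes "near_extremal_30 D"
  shows "\<exists>x\<in>D. wt 30 x = 10"
proof -
  have D: "herm_self_dual 30 D" "min_weight 30 D = 10"
    using assms by (simp_all add: near_extremal_30_def)
  have "\<exists>x\<in>D. x \<noteq> (\<lambda>k. 0)"
  proof (rule ccontr)
    assume "\<not> ?thesis"
    then have "card D \<le> 1" using card_mono[of "{\<lambda>k. 0}" D] by auto
    then show False using herm_self_dual_card[OF D(1)] by simp
  qed
  then show ?thesis using ex_wt_eq_min_weight D(2) by metis
qed

lemma near_extremal_30_wt_ge_10:
  "near_extremal_30 D \<Longrightarrow> x \<in> D \<Longrightarrow> x \<noteq> (\<lambda>k. 0) \<Longrightarrow> 10 \<le> wt 30 x"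
  using min_weight_le_wt[of x D 30] by (simp add: near_extremal_30_def)

lemma near_extremal_30_wt_vanishing_at_0:
  assumes "near_extremal_30 D" "x \<in> D" "x 0 = 0"
  shows "wt 30 x \<in> {0, 10, 12, 14, 16, 18, 20, 22, 24, 26, 28}"
proof -
  have D: "herm_self_dual 30 D"
    using assms(1) by (simp add: near_extremal_30_def)
  have "support 30 x \<subseteq> {1..29}"
    using assms(3) by (auto simp: support_def Suc_le_eq) (metis gr0I)
  then have "wt 30 x \<le> 29"
    using card_mono[of "{1..29}" "support 30 x"] by (simp add: wt_eq_card_support)
  moreover have "even (wt 30 x)"
    using herm_self_dual_even_wt[OF D assms(2)] .
  moreover have "wt 30 x = 0 \<or> 10 \<le> wt 30 x"
    using near_extremal_30_wt_ge_10[OF assms(1,2)] by (cases "x = (\<lambda>k. 0)") simp_all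
  moreover have "w \<in> {0, 10, 12, 14, 16, 18, 20, 22, 24, 26, 28}"
    if "w \<le> 29" "even w" "w = 0 \<or> 10 \<le> w" for w :: nat
    using that unfolding insert_iff empty_iff by presburger
  ultimately show ?thesis by blast
qed

lemma near_extremal_30_sum_choose_punctured_wt:
  assumes "near_extremal_30 D" "20 \<le> u" "u \<le> 29"
  shows "(\<Sum>x\<in>D. (29 - card (support 30 x - {0})) choose u)
       = (29 choose u) + (if u = 20 then card {x\<in>D. wt 30 x = 10 \<and> x 0 \<noteq> 0} else 0)"
proof -
  have D: "finite D" "(\<lambda>k. 0) \<in> D"
    using assms(1) by (auto simp: near_extremal_30_def herm_self_dual_def linear_code_def G0_eq_0
        intro: finite_linear_code)
  have "(29 - card (support 30 x - {0})) choose u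
      = (if x = (\<lambda>k. 0) then 29 choose u else 0)
        + (if u = 20 \<and> wt 30 x = 10 \<and> x 0 \<noteq> 0 then 1 else 0)" if "x \<in> D" for x
  proof (cases "x = (\<lambda>k. 0)")
    case True
    then show ?thesis by (simp add: support_def)
  next
    case False
    have "card (support 30 x - {0}) = wt 30 x - (if x 0 \<noteq> 0 then 1 else 0)"
      by (simp add: wt_eq_card_support card_Diff_singleton_if support_def)
    moreover have "10 \<le> wt 30 x"
      using near_extremal_30_wt_ge_10[OF assms(1) that False] .
    ultimately show ?thesis
      using False assms(2,3) by (cases "x 0 \<noteq> 0 \<and> wt 30 x = 10") (auto simp: binomial_eq_0)
  qed
  then have "(\<Sum>x\<in>D. (29 - card (support 30 x - {0})) choose u)
      = (\<Sum>x\<in>D. if x = (\<lambda>k. 0) then 29 choose u else 0)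
        + (\<Sum>x\<in>D. if u = 20 \<and> wt 30 x = 10 \<and> x 0 \<noteq> 0 then 1 else 0)"
    by (simp add: sum.distrib)
  then show ?thesis using D by (simp add: sum_if_eq_card)
qed

lemma near_extremal_30_shortened_weight_equation:
  assumes "near_extremal_30 D" "20 \<le> u" "u \<le> 29"
  shows "(\<Sum>w\<in>{0, 10, 12, 14, 16, 18, 20, 22, 24, 26, 28}.
            card {x\<in>D. x 0 = 0 \<and> wt 30 x = w} * ((29 - w) choose (29 - u)))
       = 4 ^ (u - 15) * ((29 choose u) + (if u = 20 then card {x\<in>D. wt 30 x = 10 \<and> x 0 \<noteq> 0} else 0))"
    (is "?L = 4 ^ (u - 15) * ?R")
proof -
  let ?W = "{0, 10, 12, 14, 16, 18, 20, 22, 24, 26, 28} :: nat set"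
  define L where "L = ?L"
  define R where "R = ?R"
  have D: "herm_self_dual 30 D" "finite D"
    using assms(1) by (auto simp: near_extremal_30_def herm_self_dual_def intro: finite_linear_code)
  have W: "wt 30 ` {x\<in>D. x 0 = 0} \<subseteq> ?W"
  proof (rule image_subsetI)
    fix x assume "x \<in> {x\<in>D. x 0 = 0}"
    then show "wt 30 x \<in> ?W" using near_extremal_30_wt_vanishing_at_0[OF assms(1)] by blast
  qed
  have "(\<Sum>x | x \<in> D \<and> x 0 = 0. (29 - wt 30 x) choose (29 - u))
      = (\<Sum>w\<in>?W. of_nat (card {x\<in>{x\<in>D. x 0 = 0}. wt 30 x = w}) * ((29 - w) choose (29 - u)))"
    by (rule sum_by_fibres[OF _ _ W, where f = "\<lambda>w. (29 - w) choose (29 - u)"]) (use D(2) in simp_all)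
  also have "\<dots> = ?L"
    by (intro sum.cong) (simp_all add: conj_assoc)
  finally have "(\<Sum>x | x \<in> D \<and> x 0 = 0. (29 - wt 30 x) choose (29 - u)) = L"
    by (simp only: L_def)
  then have "4 ^ (30 - u) * L = 2 ^ 30 * R"
    using herm_self_dual_shortening_identity[OF D(1), of u] near_extremal_30_sum_choose_punctured_wt[OF assms]
      assms(3) unfolding R_def by simp
  moreover have "(2::nat) ^ 30 = 4 ^ (30 - u) * 4 ^ (u - 15)"
  proof -
    have "(30 - u) + (u - 15) = 15" using assms(2,3) by simp
    then show ?thesis by (simp only: power_add[symmetric]) simp
  qed
  ultimately have "4 ^ (30 - u) * L = 4 ^ (30 - u) * (4 ^ (u - 15) * R)"
    by (simp only: mult.assoc)
  then have "L = 4 ^ (u - 15) * R" by simp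
  then show ?thesis by (simp only: L_def R_def)
qed

text \<open>Eliminating \<open>B 14, \<dots>, B 28\<close> from the ten equations leaves the two stated relations.\<close>
lemma near_extremal_30_shortened_weights_solve:
  fixes B :: "nat \<Rightarrow> nat" and \<gamma> :: nat
  assumes "B 0 = 1"
    and "\<And>u. 20 \<le> u \<Longrightarrow> u \<le> 29 \<Longrightarrow>
      (\<Sum>w\<in>{0, 10, 12, 14, 16, 18, 20, 22, 24, 26, 28}. B w * ((29 - w) choose (29 - u)))
      = 4 ^ (u - 15) * ((29 choose u) + (if u = 20 then \<gamma> else 0))"
  shows "B 10 = 2 * \<gamma> \<and> B 12 + 18 * \<gamma> = 71253"
  using assms(1) assms(2)[of 20] assms(2)[of 21] assms(2)[of 22] assms(2)[of 23] assms(2)[of 24]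
    assms(2)[of 25] assms(2)[of 26] assms(2)[of 27] assms(2)[of 28] assms(2)[of 29]
  by (simp add: binomial_fact' fact_numeral binomial_eq_0)

theorem fact5p4:
  fixes D :: "(nat \<Rightarrow> gf4) set"
  assumes "near_extremal_30 D"
  shows "\<exists>\<beta>::nat. card {x \<in> D. wt 30 x = 10} = 9 * \<beta> \<and> 1 \<le> \<beta> \<and> \<beta> \<le> 1319"
proof -
  have D: "herm_self_dual 30 D" "linear_code 30 D" "finite D"
    using assms by (auto simp: near_extremal_30_def herm_self_dual_def intro: finite_linear_code)
  define B where "B w = card {x\<in>D. x 0 = 0 \<and> wt 30 x = w}" for w
  define \<gamma> where "\<gamma> = card {x\<in>D. wt 30 x = 10 \<and> x 0 \<noteq> 0}"
  define \<beta> where "\<beta> = card {x\<in>D. wt 30 x = 10 \<and> x 0 = 1}"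
  have "B 0 = 1"
  proof -
    have "{x\<in>D. x 0 = 0 \<and> wt 30 x = 0} = {\<lambda>k. 0}"
      using D(2) wt_eq_0_iff by (auto simp: linear_code_def G0_eq_0)
    then show ?thesis by (simp add: B_def)
  qed
  moreover have "(\<Sum>w\<in>{0, 10, 12, 14, 16, 18, 20, 22, 24, 26, 28}. B w * ((29 - w) choose (29 - u)))
      = 4 ^ (u - 15) * ((29 choose u) + (if u = 20 then \<gamma> else 0))" if "20 \<le> u" "u \<le> 29" for u
    unfolding B_def \<gamma>_def by (rule near_extremal_30_shortened_weight_equation[OF assms that])
  ultimately have "B 10 = 2 * \<gamma>" "B 12 + 18 * \<gamma> = 71253"
    using near_extremal_30_shortened_weights_solve by blast+
  moreover have "card {x\<in>D. wt 30 x = 10} = B 10 + \<gamma>"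
    using card_Int_Diff[of "{x\<in>D. wt 30 x = 10}" "{x. x 0 = 0}"] D(3)
    unfolding B_def \<gamma>_def by (simp add: Int_def set_diff_eq conj_ac)
  moreover have "\<gamma> = 3 * \<beta>"
    unfolding \<gamma>_def \<beta>_def by (rule linear_code_card_wt_coord_nonzero[OF D(2)])
  moreover have "card {x\<in>D. wt 30 x = 10} \<noteq> 0"
    using near_extremal_30_ex_wt_10[OF assms] D(3) by auto
  ultimately show ?thesis by (intro exI[of _ \<beta>]) linarith
qed

end
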